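(* Let $\mathcal{E}$ be a $d$-dimensional Riemannian vector bundle over a topological space $X$, and let $\mu$ be a probability measure on $\mathrm{Aut}_{\mathrm{vol}}(\mathcal{E})$. Then $\mu$ is coexpanding on average if and only if it is expanding on average on $(d-1)$-planes.
   Context: $\mathrm{Aut}_{\mathrm{vol}}(\mathcal{E})$ denotes vector bundle automorphisms $F$ of $\mathcal{E}$ (covering homeomorphisms of $X$) preserving a fixed fiberwise volume form. For a measure $\mu$ on automorphisms, $\mu^n$ is the law of $F_n\circ\cdots\circ F_1$ with $F_i$ i.i.d. of law $\mu$. $\mu$ is expanding on average if there are $N,\lambda>0$ with $\int\ln\|F v\|\,d\mu^N(F)>\lambda$ for every unit vector $v\in\mathcal{E}$. $\mu$ is expanding on average on $k$-planes if there are $N,\lambda>0$ such that for every $k$-dimensional subspace $V$ of a fiber of $\mathcal{E}$, $\int\ln\|F|_{\mathrm{vol}_V}\|\,d\mu^N(F)>\lambda$, where $\|F|_{\mathrm{vol}_V}\|$ is the factor by which $F$ multiplies $k$-dimensional volume on $V$. $\mu$ is coexpanding on average if the induced random bundle maps $(F^* )^{-1}$ on the dual bundle $\mathcal{E}^*$ (covering the same base maps) are expanding on average. *)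

theory Defs
  imports "HOL-Probability.Probability"
begin

text \<open>Model of a rank-d Riemannian vector bundle (d = CARD('d)).
  The total space is a topology on pairs (x, v) with x in the base and v in real^'d,
  where each fiber carries the standard inner product of real^'d (an orthonormal
  identification of the fiber, chosen pointwise, not necessarily continuously).\<close>

definition riemannian_bundle :: "'a topology \<Rightarrow> ('a \<times> (real^'d)) topology \<Rightarrow> bool" where
  "riemannian_bundle X T \<longleftrightarrow>
     topspace T = topspace X \<times> UNIV \<and>
     continuous_map T X fst \<and>
     (\<forall>x\<in>topspace X. \<exists>U L. openin X U \<and> x \<in> U \<and>
        (\<forall>y\<in>U. linear (L y :: real^'d \<Rightarrow> real^'d) \<and> bij (L y)) \<and>
        homeomorphic_map (subtopology T (U \<times> UNIV))
          (prod_topology (subtopology X U) euclidean) (\<lambda>(y, v). (y, L y v))) \<and>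
     continuous_map (subtopology (prod_topology T T) {((x, v), (y, w)). x = y})
       euclideanreal (\<lambda>((x, v), (y, w)). v \<bullet> w)"

definition fib :: "('a \<times> (real^'d) \<Rightarrow> 'a \<times> (real^'d)) \<Rightarrow> 'a \<Rightarrow> real^'d \<Rightarrow> real^'d" where
  "fib F x = (\<lambda>v. snd (F (x, v)))"

definition bundle_aut ::
  "'a topology \<Rightarrow> ('a \<times> (real^'d)) topology \<Rightarrow> ('a \<times> (real^'d) \<Rightarrow> 'a \<times> (real^'d)) \<Rightarrow> bool" where
  "bundle_aut X T F \<longleftrightarrow>
     homeomorphic_map T T F \<and>
     (\<exists>f. homeomorphic_map X X f \<and> (\<forall>x\<in>topspace X. \<forall>v. fst (F (x, v)) = f x)) \<and>
     (\<forall>x\<in>topspace X. linear (fib F x))"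

definition aut_vol ::
  "'a topology \<Rightarrow> ('a \<times> (real^'d)) topology \<Rightarrow> ('a \<times> (real^'d) \<Rightarrow> 'a \<times> (real^'d)) set" where
  "aut_vol X T = {F. bundle_aut X T F \<and> (\<forall>x\<in>topspace X. \<bar>det (matrix (fib F x))\<bar> = 1)}"

text \<open>F_n o ... o F_1 where F_(i+1) = w i.\<close>
fun iter_comp :: "(nat \<Rightarrow> ('b \<Rightarrow> 'b)) \<Rightarrow> nat \<Rightarrow> 'b \<Rightarrow> 'b" where
  "iter_comp w 0 = id"
| "iter_comp w (Suc n) = w n \<circ> iter_comp w n"

text \<open>Integral with respect to the law mu^N of F_N o ... o F_1, F_i iid of law mu.\<close>
definition conv_integral ::
  "('b \<Rightarrow> 'b) measure \<Rightarrow> nat \<Rightarrow> (('b \<Rightarrow> 'b) \<Rightarrow> real) \<Rightarrow> real" where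
  "conv_integral \<mu> N g = (\<integral>w. g (iter_comp w N) \<partial>(PiM {..<N} (\<lambda>_. \<mu>)))"

definition expanding_on_average ::
  "'a topology \<Rightarrow> ('a \<times> (real^'d) \<Rightarrow> 'a \<times> (real^'d)) measure \<Rightarrow> bool" where
  "expanding_on_average X \<mu> \<longleftrightarrow>
     (\<exists>N::nat. \<exists>c>0. \<forall>x\<in>topspace X. \<forall>v::real^'d. norm v = 1 \<longrightarrow>
        conv_integral \<mu> N (\<lambda>F. ln (norm (fib F x v))) > c)"

definition gram_det :: "(nat \<Rightarrow> real^'d) \<Rightarrow> nat \<Rightarrow> real" where
  "gram_det b k = (\<Sum>p | p permutes {..<k}. of_int (sign p) * (\<Prod>i<k. b i \<bullet> b (p i)))"

text \<open>Factor by which A multiplies k-dimensional volume on the k-dimensional subspace V: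
  the square root of the Gram determinant of the images of an orthonormal basis of V.\<close>
definition vol_factor :: "(real^'d \<Rightarrow> real^'d) \<Rightarrow> (real^'d) set \<Rightarrow> nat \<Rightarrow> real" where
  "vol_factor A V k =
     (let b = (SOME b. (\<forall>i<k. \<forall>j<k. b i \<bullet> b j = (if i = j then 1 else 0)) \<and>
                        span (b ` {..<k}) = V)
      in sqrt (gram_det (A \<circ> b) k))"

definition expanding_on_average_planes ::
  "'a topology \<Rightarrow> ('a \<times> (real^'d) \<Rightarrow> 'a \<times> (real^'d)) measure \<Rightarrow> nat \<Rightarrow> bool" where
  "expanding_on_average_planes X \<mu> k \<longleftrightarrow>
     (\<exists>N::nat. \<exists>c>0. \<forall>x\<in>topspace X. \<forall>V::(real^'d) set. subspace V \<and> dim V = k \<longrightarrow>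
        conv_integral \<mu> N (\<lambda>F. ln (vol_factor (fib F x) V k)) > c)"

text \<open>Coexpanding: the dual maps (F^*)^{-1}, xi \<mapsto> xi o (F_x)^{-1}, on the dual bundle
  (dual fibers = linear functionals with the dual (operator) norm) are expanding on average.\<close>
definition coexpanding_on_average ::
  "'a topology \<Rightarrow> ('a \<times> (real^'d) \<Rightarrow> 'a \<times> (real^'d)) measure \<Rightarrow> bool" where
  "coexpanding_on_average X \<mu> \<longleftrightarrow>
     (\<exists>N::nat. \<exists>c>0. \<forall>x\<in>topspace X. \<forall>\<xi>::real^'d \<Rightarrow> real. linear \<xi> \<and> onorm \<xi> = 1 \<longrightarrow>
        conv_integral \<mu> N (\<lambda>F. ln (onorm (\<xi> \<circ> inv (fib F x)))) > c)"

end

theory Submission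
  imports Defs "Jordan_Normal_Form.Determinant"
begin

text \<open>
  Let \<open>n\<close> be a unit normal of a hyperplane \<open>V\<close> and \<open>A\<close> a linear isomorphism. Extending an
  orthonormal basis \<open>b\<close> of \<open>V\<close> by \<open>n\<close> gives an orthonormal basis \<open>\<beta>\<close> of the whole space. The
  Gram matrix \<open>G\<close> of the vectors \<open>A (\<beta> i)\<close> has determinant \<open>(det A)\<^sup>2\<close>, and its inverse is
  the Gram matrix of the vectors \<open>adjoint (inv A) (\<beta> i)\<close>. Hence the last diagonal cofactor of
  \<open>G\<close>, which is the Gram determinant of the vectors \<open>A (b i)\<close>, i.e. the squared volume factor
  of \<open>A\<close> on \<open>V\<close>, equals \<open>(det A)\<^sup>2 * (norm (adjoint (inv A) n))\<^sup>2\<close>; and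
  \<open>norm (adjoint (inv A) n)\<close> is the dual norm of the covector \<open>(\<lambda>y. n \<bullet> y) \<circ> inv A\<close>.

  Every product of automorphisms in \<open>Aut_vol\<close> acts on fibers with \<open>|det| = 1\<close>, unit covectors
  are exactly the maps \<open>\<lambda>y. n \<bullet> y\<close> with \<open>norm n = 1\<close>, and the \<open>(d-1)\<close>-planes are exactly their
  kernels. So the integrands in the two definitions agree pair by pair, and both conditions hold
  with the same \<open>N\<close> and the same constant.
\<close>

no_notation Matrix.vec_index (infixl \<open>$\<close> 100)
no_notation Matrix.scalar_prod (infix \<open>\<bullet>\<close> 70)
unbundle no m_inv_syntax

section \<open>Covectors and orthonormal families\<close>

definition orthonormal_upto :: "(nat \<Rightarrow> 'a::real_inner) \<Rightarrow> nat \<Rightarrow> bool" where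
  "orthonormal_upto b k \<longleftrightarrow> (\<forall>i<k. \<forall>j<k. b i \<bullet> b j = (if i = j then 1 else 0))"

lemma onorm_inner_const: "onorm (\<lambda>y. c \<bullet> y) = norm (c :: 'a::real_inner)"
proof (rule antisym)
  show "onorm (\<lambda>y. c \<bullet> y) \<le> norm c"
    by (rule onorm_bound) (auto simp: Cauchy_Schwarz_ineq2)
  have "norm c * norm c \<le> onorm (\<lambda>y. c \<bullet> y) * norm c"
    using onorm[OF bounded_linear_inner_right, of c c] by (simp add: dot_square_norm power2_eq_square)
  then show "norm c \<le> onorm (\<lambda>y. c \<bullet> y)"
    using onorm_pos_le[OF bounded_linear_inner_right, of c] by (cases "c = 0") auto
qed

lemma onorm_inner_comp_linear:
  fixes f :: "'a::euclidean_space \<Rightarrow> 'b::euclidean_space"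
  assumes "linear f"
  shows "onorm ((\<lambda>y. n \<bullet> y) \<circ> f) = norm (adjoint f n)"
proof -
  have "(\<lambda>y. n \<bullet> y) \<circ> f = (\<lambda>y. adjoint f n \<bullet> y)"
    using adjoint_works[OF assms] by (auto simp: inner_commute)
  then show ?thesis
    by (simp add: onorm_inner_const)
qed

lemma linear_functional_eq_inner:
  fixes \<xi> :: "'a::euclidean_space \<Rightarrow> real"
  assumes "linear \<xi>"
  shows "\<xi> = (\<lambda>y. adjoint \<xi> 1 \<bullet> y)"
proof
  fix y
  show "\<xi> y = adjoint \<xi> 1 \<bullet> y"
    using adjoint_works[OF assms, of y 1] by (simp add: inner_commute)
qed

lemma all_unit_covectors_iff:
  fixes P :: "('a::euclidean_space \<Rightarrow> real) \<Rightarrow> bool"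
  shows "(\<forall>\<xi>. linear \<xi> \<and> onorm \<xi> = 1 \<longrightarrow> P \<xi>) \<longleftrightarrow> (\<forall>n. norm n = 1 \<longrightarrow> P (\<lambda>y. n \<bullet> y))"
proof (intro iffI allI impI)
  fix n :: 'a assume "\<forall>\<xi>. linear \<xi> \<and> onorm \<xi> = 1 \<longrightarrow> P \<xi>" "norm n = 1"
  then show "P (\<lambda>y. n \<bullet> y)"
    using bounded_linear_inner_right[of n] by (simp add: onorm_inner_const linear_linear)
next
  fix \<xi> :: "'a \<Rightarrow> real" assume "\<forall>n. norm n = 1 \<longrightarrow> P (\<lambda>y. n \<bullet> y)" "linear \<xi> \<and> onorm \<xi> = 1"
  then show "P \<xi>"
    using linear_functional_eq_inner[of \<xi>] onorm_inner_const[of "adjoint \<xi> 1"] by metis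
qed

lemma orthonormal_upto_expand:
  fixes \<beta> :: "nat \<Rightarrow> 'a::euclidean_space"
  assumes \<beta>: "orthonormal_upto \<beta> DIM('a)"
  shows "(\<Sum>l<DIM('a). (\<beta> l \<bullet> x) *\<^sub>R \<beta> l) = x"
proof -
  define B where "B = \<beta> ` {..<DIM('a)}"
  have inj: "inj_on \<beta> {..<DIM('a)}"
  proof (rule inj_onI, rule ccontr)
    fix i j assume "i \<in> {..<DIM('a)}" "j \<in> {..<DIM('a)}" "\<beta> i = \<beta> j" "i \<noteq> j"
    then show False
      using \<beta> unfolding orthonormal_upto_def by (metis lessThan_iff zero_neq_one)
  qed
  have orth: "pairwise real_inner_class.orthogonal B" and unit: "\<And>v. v \<in> B \<Longrightarrow> norm v = 1"
    using \<beta> by (auto simp: B_def orthonormal_upto_def pairwise_def real_inner_class.orthogonal_def norm_eq_1)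
  then have "independent B"
    by (intro pairwise_orthogonal_independent) force+
  moreover have "card B = DIM('a)"
    using card_image[OF inj] by (simp add: B_def)
  ultimately have "x \<in> span B"
    using card_ge_dim_independent[of B UNIV] by auto
  then have "(\<Sum>v\<in>B. (x \<bullet> v) *\<^sub>R v) = x"
    using orthonormal_basis_expand[OF orth unit] by (simp add: B_def)
  then show ?thesis
    by (simp add: B_def sum.reindex[OF inj] inner_commute)
qed

lemma orthonormal_basis_of_subspace:
  fixes V :: "'a::euclidean_space set"
  assumes "subspace V"
  obtains b where "orthonormal_upto b (dim V)" "span (b ` {..<dim V}) = V"
proof -
  obtain B where B: "pairwise real_inner_class.orthogonal B" "\<And>v. v \<in> B \<Longrightarrow> norm v = 1"
      "independent B" "card B = dim V" "span B = V"
    using orthonormal_basis_subspace[OF assms] by metis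
  obtain h where h: "bij_betw h {..<dim V} B"
    using ex_bij_betw_nat_finite[of B] B(3,4) finiteI_independent by (auto simp: atLeast0LessThan)
  have "orthonormal_upto h (dim V)"
    unfolding orthonormal_upto_def
  proof (intro allI impI)
    fix i j assume "i < dim V" "j < dim V"
    with h have "h i \<in> B" "h j \<in> B" "h i = h j \<longleftrightarrow> i = j"
      by (auto simp: bij_betw_def inj_on_def)
    with B(1,2) show "h i \<bullet> h j = (if i = j then 1 else 0)"
      by (auto simp: pairwise_def real_inner_class.orthogonal_def norm_eq_1)
  qed
  moreover have "span (h ` {..<dim V}) = V"
    using h B(5) by (simp add: bij_betw_def)
  ultimately show ?thesis
    using that by blast
qed

section \<open>Gram matrices and determinants\<close>

definition gram_mat :: "(nat \<Rightarrow> 'a::real_inner) \<Rightarrow> nat \<Rightarrow> real mat" where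
  "gram_mat b k = Matrix.mat k k (\<lambda>(i, j). b i \<bullet> b j)"

lemma gram_mat_orthonormal: "orthonormal_upto \<beta> k \<Longrightarrow> gram_mat \<beta> k = 1\<^sub>m k"
  by (rule eq_matI) (auto simp: gram_mat_def orthonormal_upto_def)

lemma det_mat_Leibniz:
  "Determinant.det (Matrix.mat n n f) =
     (\<Sum>p | p permutes {..<n}. of_int (sign p) * (\<Prod>i<n. f (i, p i)))"
proof -
  have "Determinant.det (Matrix.mat n n f) =
      (\<Sum>p | p permutes {0..<n}. of_int (sign p) * (\<Prod>i=0..<n. Matrix.mat n n f $$ (i, p i)))"
    by (rule det_def') auto
  also have "\<dots> = (\<Sum>p | p permutes {..<n}. of_int (sign p) * (\<Prod>i<n. f (i, p i)))"
    by (intro sum.cong arg_cong2[where f = "(*)"] prod.cong refl)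
       (auto simp: atLeast0LessThan permutes_in_image)
  finally show ?thesis .
qed

lemma gram_det_eq_det_gram_mat: "gram_det b k = Determinant.det (gram_mat b k)"
  by (simp add: gram_det_def gram_mat_def det_mat_Leibniz)

lemma mat_delete_gram_mat: "mat_delete (gram_mat b (Suc k)) k k = gram_mat b k"
  by (rule eq_matI) (auto simp: mat_delete_def gram_mat_def)

lemma adj_mat_eq_det_smult_inverse:
  assumes G: "G \<in> carrier_mat n n" and H: "H \<in> carrier_mat n n" and GH: "G * H = 1\<^sub>m n"
  shows "adj_mat G = Determinant.det G \<cdot>\<^sub>m H"
proof -
  have "adj_mat G = adj_mat G * (G * H)"
    using adj_mat(1)[OF G] GH by simp
  also have "\<dots> = (adj_mat G * G) * H"
    using adj_mat(1)[OF G] G H by (simp add: assoc_mult_mat)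
  also have "\<dots> = Determinant.det G \<cdot>\<^sub>m H"
    using adj_mat(3)[OF G] H by (simp add: mult_smult_assoc_mat[OF one_carrier_mat H])
  finally show ?thesis .
qed

lemma det_vec_eq_det_mat:
  fixes M :: "'a::comm_ring_1^'n^'n"
  assumes e: "bij_betw e {..<CARD('n)} UNIV"
  shows "Determinants.det M = Determinant.det (Matrix.mat CARD('n) CARD('n) (\<lambda>(i, j). M $ e i $ e j))"
proof -
  define d where "d = CARD('n)"
  define e' where "e' = inv_into {..<d} e"
  have e: "bij_betw e {..<d} UNIV" and inj: "inj_on e {..<d}"
    using e bij_betw_imp_inj_on by (auto simp: d_def)
  have e': "bij_betw e' UNIV {..<d}"
    unfolding e'_def by (rule bij_betw_inv_into[OF e])
  have e_e': "e (e' t) = t" for t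
    unfolding e'_def using e bij_betw_inv_into_right by fastforce
  have e'_e: "i \<in> {..<d} \<Longrightarrow> e' (e i) = i" for i
    unfolding e'_def using e bij_betw_inv_into_left by fastforce
  have "Determinant.det (Matrix.mat d d (\<lambda>(i, j). M $ e i $ e j)) =
      (\<Sum>p | p permutes {..<d}. of_int (sign p) * (\<Prod>i<d. M $ e i $ e (p i)))"
    by (simp add: det_mat_Leibniz)
  also have "\<dots> = (\<Sum>q | q permutes (UNIV::'n set). of_int (sign q) * (\<Prod>t\<in>UNIV. M $ t $ q t))"
  proof (rule sum.reindex_bij_witness[where i = "map_permutation UNIV e'" and j = "map_permutation {..<d} e"])
    fix p assume "p \<in> {p. p permutes {..<d}}"
    then have p: "p permutes {..<d}" by simp
    show "map_permutation UNIV e' (map_permutation {..<d} e p) = p"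
      by (rule map_permutation_compose_inv[OF e p e'_e])
    show "map_permutation {..<d} e p \<in> {q. q permutes UNIV}"
      using map_permutation_permutes[OF e p] by simp
    have "(\<Prod>t\<in>UNIV. M $ t $ map_permutation {..<d} e p t) =
        (\<Prod>i<d. M $ e i $ map_permutation {..<d} e p (e i))"
      by (rule prod.reindex_bij_betw[OF e, symmetric])
    also have "\<dots> = (\<Prod>i<d. M $ e i $ e (p i))"
      by (rule prod.cong) (auto simp: map_permutation_apply[OF inj])
    finally show "of_int (sign (map_permutation {..<d} e p)) * (\<Prod>t\<in>UNIV. M $ t $ map_permutation {..<d} e p t) =
        of_int (sign p) * (\<Prod>i<d. M $ e i $ e (p i))"
      using sign_map_permutation[OF inj p] by simp
  next
    fix q assume "q \<in> {q. q permutes (UNIV::'n set)}"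
    then have q: "q permutes (UNIV::'n set)" by simp
    show "map_permutation {..<d} e (map_permutation UNIV e' q) = q"
      by (rule map_permutation_compose_inv[OF e' q]) (simp add: e_e')
    show "map_permutation UNIV e' q \<in> {p. p permutes {..<d}}"
      using map_permutation_permutes[OF e' q] by simp
  qed
  also have "\<dots> = Determinants.det M"
    by (simp add: Determinants.det_def)
  finally show ?thesis
    by (simp add: d_def)
qed

lemma det_gram_mat_eq_det_square:
  fixes v :: "nat \<Rightarrow> real^'n"
  assumes e: "bij_betw e {..<CARD('n)} UNIV"
  shows "Determinant.det (gram_mat v CARD('n)) =
    (Determinants.det (\<chi> t. v (inv_into {..<CARD('n)} e t)))\<^sup>2"
proof -
  define R :: "real^'n^'n" where "R = (\<chi> t. v (inv_into {..<CARD('n)} e t))"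
  have "gram_mat v CARD('n) = Matrix.mat CARD('n) CARD('n) (\<lambda>(i, j). (R ** transpose R) $ e i $ e j)"
    using e by (intro eq_matI) (auto simp: gram_mat_def matrix_mult_transpose_dot_row Finite_Cartesian_Product.row_def R_def bij_betw_inv_into_left)
  then show ?thesis
    using det_vec_eq_det_mat[OF e, of "R ** transpose R"]
    by (simp add: det_mul det_transpose power2_eq_square R_def)
qed

lemma det_gram_mat_image_orthonormal:
  fixes A :: "real^'d \<Rightarrow> real^'d"
  assumes A: "linear A" and \<beta>: "orthonormal_upto \<beta> CARD('d)"
  shows "Determinant.det (gram_mat (A \<circ> \<beta>) CARD('d)) = (Determinants.det (matrix A))\<^sup>2"
proof -
  obtain e :: "nat \<Rightarrow> 'd" where e: "bij_betw e {..<CARD('d)} UNIV"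
    using ex_bij_betw_nat_finite[of "UNIV::'d set"] by (auto simp: atLeast0LessThan)
  define R :: "real^'d^'d" where "R = (\<chi> t. \<beta> (inv_into {..<CARD('d)} e t))"
  have "(\<chi> t. A (\<beta> (inv_into {..<CARD('d)} e t))) = (\<chi> t. matrix A *v \<beta> (inv_into {..<CARD('d)} e t))"
    using fun_cong[OF matrix_vector_mul(2)[OF A]] by simp
  also have "\<dots> = R ** transpose (matrix A)"
    by (simp add: vec_eq_iff matrix_matrix_mult_def matrix_vector_mult_def transpose_def R_def mult.commute)
  finally have "Determinant.det (gram_mat (A \<circ> \<beta>) CARD('d)) = (Determinants.det R * Determinants.det (matrix A))\<^sup>2"
    using det_gram_mat_eq_det_square[OF e, of "A \<circ> \<beta>"] by (simp add: det_mul det_transpose)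
  moreover have "(Determinants.det R)\<^sup>2 = 1"
    using det_gram_mat_eq_det_square[OF e, of \<beta>] gram_mat_orthonormal[OF \<beta>] by (simp add: R_def)
  ultimately show ?thesis
    by (simp add: power_mult_distrib)
qed

lemma gram_mat_image_mult_gram_mat_adjoint_inverse:
  fixes A :: "'a::euclidean_space \<Rightarrow> 'a"
  assumes A: "linear A" "inj A" and \<beta>: "orthonormal_upto \<beta> DIM('a)"
  shows "gram_mat (A \<circ> \<beta>) DIM('a) * gram_mat (adjoint (inv A) \<circ> \<beta>) DIM('a) = 1\<^sub>m DIM('a)"
proof -
  define c where "c l = adjoint (inv A) (\<beta> l)" for l
  have inv_A: "linear (inv A)"
    using inj_linear_imp_inv_linear[OF A] .
  have A_inv: "A (inv A y) = y" for y
    using linear_inj_imp_surj[OF A] by (simp add: surj_f_inv_f)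
  have A_c: "A x \<bullet> c j = x \<bullet> \<beta> j" for x j
    using adjoint_works[OF inv_A, of "A x" "\<beta> j"] A(2) by (simp add: c_def)
  have expand: "(\<Sum>l<DIM('a). (c l \<bullet> y) *\<^sub>R A (\<beta> l)) = y" for y
  proof -
    have "(\<Sum>l<DIM('a). (c l \<bullet> y) *\<^sub>R A (\<beta> l)) = A (\<Sum>l<DIM('a). (\<beta> l \<bullet> inv A y) *\<^sub>R \<beta> l)"
      using adjoint_works[OF inv_A, of y]
      by (simp add: linear_sum[OF A(1)] linear_scale[OF A(1)] c_def inner_commute)
    also have "\<dots> = y"
      by (simp add: orthonormal_upto_expand[OF \<beta>] A_inv)
    finally show ?thesis .
  qed
  show ?thesis
  proof (rule eq_matI)
    fix i j assume "i < dim_row (1\<^sub>m DIM('a) :: real mat)" "j < dim_col (1\<^sub>m DIM('a) :: real mat)"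
    then have ij: "i < DIM('a)" "j < DIM('a)" by auto
    have "(gram_mat (A \<circ> \<beta>) DIM('a) * gram_mat (adjoint (inv A) \<circ> \<beta>) DIM('a)) $$ (i, j) =
        (\<Sum>l<DIM('a). (A (\<beta> i) \<bullet> A (\<beta> l)) * (c l \<bullet> c j))"
      using ij by (simp add: gram_mat_def c_def scalar_prod_def atLeast0LessThan)
    also have "\<dots> = A (\<beta> i) \<bullet> (\<Sum>l<DIM('a). (c l \<bullet> c j) *\<^sub>R A (\<beta> l))"
      by (simp add: inner_sum_right mult.commute)
    also have "\<dots> = 1\<^sub>m DIM('a) $$ (i, j)"
      using \<beta> ij by (simp add: expand A_c orthonormal_upto_def)
    finally show "(gram_mat (A \<circ> \<beta>) DIM('a) * gram_mat (adjoint (inv A) \<circ> \<beta>) DIM('a)) $$ (i, j) =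
        1\<^sub>m DIM('a) $$ (i, j)" .
  qed (auto simp: gram_mat_def)
qed

section \<open>The volume factor on a hyperplane\<close>

lemma gram_det_image_hyperplane_basis:
  fixes A :: "real^'d \<Rightarrow> real^'d"
  assumes A: "linear A" "inj A" and n: "norm n = 1"
    and b: "orthonormal_upto b (CARD('d) - 1)" and b_n: "\<And>i. i < CARD('d) - 1 \<Longrightarrow> n \<bullet> b i = 0"
  shows "gram_det (A \<circ> b) (CARD('d) - 1) =
    (Determinants.det (matrix A))\<^sup>2 * (norm (adjoint (inv A) n))\<^sup>2"
proof -
  define k where "k = CARD('d) - 1"
  have d: "CARD('d) = Suc k"
    by (simp add: k_def)
  define \<beta> where "\<beta> = b(k := n)"
  have \<beta>: "orthonormal_upto \<beta> CARD('d)"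
    unfolding orthonormal_upto_def
  proof (intro allI impI)
    fix i j assume "i < CARD('d)" "j < CARD('d)"
    then have "i < k \<or> i = k" "j < k \<or> j = k"
      unfolding d by linarith+
    then show "\<beta> i \<bullet> \<beta> j = (if i = j then 1 else 0)"
      using b b_n[of i] b_n[of j] n unfolding k_def[symmetric]
      by (auto simp: \<beta>_def orthonormal_upto_def inner_commute norm_eq_1)
  qed
  define G where "G = gram_mat (A \<circ> \<beta>) CARD('d)"
  define H where "H = gram_mat (adjoint (inv A) \<circ> \<beta>) CARD('d)"
  have G: "G \<in> carrier_mat CARD('d) CARD('d)" and H: "H \<in> carrier_mat CARD('d) CARD('d)"
    unfolding G_def H_def gram_mat_def by (rule mat_carrier)+
  have "G * H = 1\<^sub>m CARD('d)"
    using gram_mat_image_mult_gram_mat_adjoint_inverse[OF A, of \<beta>] \<beta> by (simp add: G_def H_def)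
  then have adj: "adj_mat G = Determinant.det G \<cdot>\<^sub>m H"
    by (rule adj_mat_eq_det_smult_inverse[OF G H])
  have "gram_mat (A \<circ> b) k = gram_mat (A \<circ> \<beta>) k"
    by (rule eq_matI) (auto simp: gram_mat_def \<beta>_def)
  also have "\<dots> = mat_delete G k k"
    unfolding G_def d by (rule mat_delete_gram_mat[symmetric])
  finally have "gram_det (A \<circ> b) k = Determinant.det (mat_delete G k k)"
    by (simp add: gram_det_eq_det_gram_mat)
  also have "\<dots> = adj_mat G $$ (k, k)"
    using G unfolding d by (simp add: adj_mat_def cofactor_def)
  also have "\<dots> = Determinant.det G * H $$ (k, k)"
    using H unfolding adj d by simp
  also have "H $$ (k, k) = (norm (adjoint (inv A) n))\<^sup>2"
    unfolding H_def gram_mat_def d by (simp add: \<beta>_def dot_square_norm)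
  also have "Determinant.det G = (Determinants.det (matrix A))\<^sup>2"
    unfolding G_def by (rule det_gram_mat_image_orthonormal[OF A(1) \<beta>])
  finally show ?thesis
    by (simp only: k_def)
qed

lemma vol_factor_hyperplane:
  fixes A :: "real^'d \<Rightarrow> real^'d"
  assumes A: "linear A" "inj A" and n: "norm n = 1"
    and V: "subspace V" "dim V = CARD('d) - 1" and V_n: "\<And>v. v \<in> V \<Longrightarrow> n \<bullet> v = 0"
  shows "vol_factor A V (CARD('d) - 1) = \<bar>Determinants.det (matrix A)\<bar> * onorm ((\<lambda>y. n \<bullet> y) \<circ> inv A)"
proof -
  define k where "k = CARD('d) - 1"
  define b where "b = (SOME b. orthonormal_upto b k \<and> span (b ` {..<k}) = V)"
  have "\<exists>b. orthonormal_upto b k \<and> span (b ` {..<k}) = V"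
    using orthonormal_basis_of_subspace[OF V(1)] V(2) by (metis k_def)
  then have "orthonormal_upto b k \<and> span (b ` {..<k}) = V"
    unfolding b_def by (rule someI_ex)
  then have b: "orthonormal_upto b k" "span (b ` {..<k}) = V"
    by blast+
  have b_n: "n \<bullet> b i = 0" if "i < CARD('d) - 1" for i
    using V_n span_base[of "b i" "b ` {..<k}"] b(2) that by (simp add: k_def)
  have "vol_factor A V k = sqrt (gram_det (A \<circ> b) k)"
    unfolding vol_factor_def b_def orthonormal_upto_def by simp
  also have "\<dots> = \<bar>Determinants.det (matrix A)\<bar> * norm (adjoint (inv A) n)"
    using gram_det_image_hyperplane_basis[OF A n, of b] b(1) b_n
    by (simp add: k_def real_sqrt_mult)
  also have "\<dots> = \<bar>Determinants.det (matrix A)\<bar> * onorm ((\<lambda>y. n \<bullet> y) \<circ> inv A)"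
    by (simp add: onorm_inner_comp_linear inj_linear_imp_inv_linear[OF A])
  finally show ?thesis
    by (simp only: k_def)
qed

section \<open>Products of volume-preserving automorphisms\<close>

definition unimodular :: "(real^'d \<Rightarrow> real^'d) \<Rightarrow> bool" where
  "unimodular A \<longleftrightarrow> linear A \<and> \<bar>Determinants.det (matrix A)\<bar> = 1"

lemma unimodular_comp: "unimodular A \<Longrightarrow> unimodular B \<Longrightarrow> unimodular (B \<circ> A)"
  by (simp add: unimodular_def linear_compose matrix_compose det_mul abs_mult)

lemma unimodular_inj: "unimodular A \<Longrightarrow> inj A"
  by (auto simp: unimodular_def det_nz_iff_inj[symmetric])

lemma fib_comp:
  assumes "\<And>v. fst (F (x, v)) = y"
  shows "fib (G \<circ> F) x = fib G y \<circ> fib F x"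
proof
  fix v
  have "F (x, v) = (y, fib F x v)"
    using assms by (simp add: fib_def prod_eq_iff)
  then show "fib (G \<circ> F) x v = (fib G y \<circ> fib F x) v"
    by (simp add: fib_def)
qed

lemma aut_vol_fiber:
  assumes "F \<in> aut_vol X T" "x \<in> topspace X"
  obtains y where "y \<in> topspace X" "\<And>v. fst (F (x, v)) = y" "unimodular (fib F x)"
proof -
  obtain f where "homeomorphic_map X X f" "\<And>v. fst (F (x, v)) = f x"
    using assms by (auto simp: aut_vol_def bundle_aut_def)
  moreover have "unimodular (fib F x)"
    using assms by (simp add: aut_vol_def bundle_aut_def unimodular_def)
  ultimately show ?thesis
    using that assms(2) homeomorphic_imp_surjective_map by blast
qed

lemma iter_comp_aut_vol_fiber:
  assumes "\<And>i. i < N \<Longrightarrow> w i \<in> aut_vol X T" "x \<in> topspace X"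
  obtains y where "y \<in> topspace X" "\<And>v. fst (iter_comp w N (x, v)) = y"
    "unimodular (fib (iter_comp w N) x)"
  using assms(1)
proof (induction N arbitrary: thesis)
  case 0
  show ?case
  proof (rule 0(1)[OF assms(2)])
    show "fst (iter_comp w 0 (x, v)) = x" for v
      by simp
    have "fib (iter_comp w 0) x = id"
      by (auto simp: fib_def)
    then show "unimodular (fib (iter_comp w 0) x)"
      unfolding unimodular_def by (simp add: matrix_id_mat_1 det_I linear_id)
  qed
next
  case (Suc N)
  obtain y where y: "y \<in> topspace X" "\<And>v. fst (iter_comp w N (x, v)) = y"
    and L: "unimodular (fib (iter_comp w N) x)"
    using Suc.IH Suc.prems(2) by (metis less_Suc_eq)
  obtain z where z: "z \<in> topspace X" "\<And>v. fst (w N (y, v)) = z" and M: "unimodular (fib (w N) y)"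
    using aut_vol_fiber[OF Suc.prems(2)[of N] y(1)] by blast
  show ?case
  proof (rule Suc.prems(1)[OF z(1)])
    show "fst (iter_comp w (Suc N) (x, v)) = z" for v
    proof -
      have "iter_comp w N (x, v) = (y, fib (iter_comp w N) x v)"
        using y(2)[of v] by (simp add: fib_def prod_eq_iff)
      then show ?thesis
        using z(2) by simp
    qed
    show "unimodular (fib (iter_comp w (Suc N)) x)"
      unfolding iter_comp.simps fib_comp[where F = "iter_comp w N" and G = "w N", OF y(2)]
      by (rule unimodular_comp[OF L M])
  qed
qed

lemma conv_integral_cong_aut_vol:
  assumes \<mu>: "space \<mu> \<subseteq> aut_vol X T" and x: "x \<in> topspace X"
    and gh: "\<And>F. unimodular (fib F x) \<Longrightarrow> g F = h F"
  shows "conv_integral \<mu> N g = conv_integral \<mu> N h"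
  unfolding conv_integral_def
proof (rule Bochner_Integration.integral_cong[OF refl])
  fix w assume "w \<in> space (PiM {..<N} (\<lambda>_. \<mu>))"
  then have "\<And>i. i < N \<Longrightarrow> w i \<in> aut_vol X T"
    using \<mu> by (auto simp: space_PiM PiE_iff)
  then show "g (iter_comp w N) = h (iter_comp w N)"
    using iter_comp_aut_vol_fiber[OF _ x] gh by metis
qed

lemma coexpanding_on_average_iff_unit_normals:
  "coexpanding_on_average X \<mu> \<longleftrightarrow>
    (\<exists>N. \<exists>c>0. \<forall>x\<in>topspace X. \<forall>n::real^'d. norm n = 1 \<longrightarrow>
      c < conv_integral \<mu> N (\<lambda>F. ln (onorm ((\<lambda>y. n \<bullet> y) \<circ> inv (fib F x)))))"
  unfolding coexpanding_on_average_def by (simp only: all_unit_covectors_iff)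

lemma expanding_on_average_hyperplanes_iff_unit_normals:
  fixes \<mu> :: "('a \<times> (real^'d) \<Rightarrow> 'a \<times> (real^'d)) measure"
  assumes \<mu>: "space \<mu> \<subseteq> aut_vol X T"
  shows "expanding_on_average_planes X \<mu> (CARD('d) - 1) \<longleftrightarrow>
    (\<exists>N. \<exists>c>0. \<forall>x\<in>topspace X. \<forall>n::real^'d. norm n = 1 \<longrightarrow>
      c < conv_integral \<mu> N (\<lambda>F. ln (onorm ((\<lambda>y. n \<bullet> y) \<circ> inv (fib F x)))))"
proof -
  let ?vol = "\<lambda>N x V. conv_integral \<mu> N (\<lambda>F. ln (vol_factor (fib F x) V (CARD('d) - 1)))"
  let ?conorm = "\<lambda>N x n. conv_integral \<mu> N (\<lambda>F. ln (onorm ((\<lambda>y. n \<bullet> y) \<circ> inv (fib F x))))"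
  have vol_eq: "?vol N x V = ?conorm N x n"
    if "x \<in> topspace X" "norm n = 1" "subspace V" "dim V = CARD('d) - 1" "\<And>v. v \<in> V \<Longrightarrow> n \<bullet> v = 0"
    for N x n V
  proof (rule conv_integral_cong_aut_vol[OF \<mu> that(1)])
    fix F :: "'a \<times> (real^'d) \<Rightarrow> 'a \<times> (real^'d)"
    assume "unimodular (fib F x)"
    then show "ln (vol_factor (fib F x) V (CARD('d) - 1)) = ln (onorm ((\<lambda>y. n \<bullet> y) \<circ> inv (fib F x)))"
      using vol_factor_hyperplane[OF _ unimodular_inj that(2-5)] by (simp add: unimodular_def)
  qed
  have "(\<forall>V. subspace V \<and> dim V = CARD('d) - 1 \<longrightarrow> c < ?vol N x V) \<longleftrightarrow>
      (\<forall>n::real^'d. norm n = 1 \<longrightarrow> c < ?conorm N x n)"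
    if x: "x \<in> topspace X" for N x c
  proof (intro iffI allI impI)
    fix n :: "real^'d"
    assume "\<forall>V. subspace V \<and> dim V = CARD('d) - 1 \<longrightarrow> c < ?vol N x V" and n: "norm n = 1"
    moreover have "n \<noteq> 0"
      using n by auto
    then have hyperplane: "subspace {y. n \<bullet> y = 0}" "dim {y. n \<bullet> y = 0} = CARD('d) - 1"
      by (simp_all add: subspace_hyperplane dim_hyperplane)
    ultimately have "c < ?vol N x {y. n \<bullet> y = 0}"
      by blast
    also have "?vol N x {y. n \<bullet> y = 0} = ?conorm N x n"
      by (rule vol_eq[OF x n hyperplane]) simp
    finally show "c < ?conorm N x n" .
  next
    fix V :: "(real^'d) set"
    assume conorm: "\<forall>n::real^'d. norm n = 1 \<longrightarrow> c < ?conorm N x n"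
      and V: "subspace V \<and> dim V = CARD('d) - 1"
    obtain z :: "real^'d" where "z \<noteq> 0" "\<And>v. v \<in> span V \<Longrightarrow> real_inner_class.orthogonal z v"
      using V orthogonal_to_subspace_exists[of V] by auto
    then have n: "norm (z /\<^sub>R norm z) = 1" and V_n: "\<And>v. v \<in> V \<Longrightarrow> (z /\<^sub>R norm z) \<bullet> v = 0"
      by (auto simp: real_inner_class.orthogonal_def span_base)
    have "c < ?conorm N x (z /\<^sub>R norm z)"
      using conorm n by blast
    also have "\<dots> = ?vol N x V"
      using vol_eq[OF x n _ _ V_n] V by simp
    finally show "c < ?vol N x V" .
  qed
  then show ?thesis
    unfolding expanding_on_average_planes_def by simp
qed

theorem proposition3p12:
  fixes X :: "'a topology" and T :: "('a \<times> (real^'d)) topology"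
    and \<mu> :: "('a \<times> (real^'d) \<Rightarrow> 'a \<times> (real^'d)) measure"
  assumes "riemannian_bundle X T"
    and "prob_space \<mu>"
    and "space \<mu> \<subseteq> aut_vol X T"
  shows "coexpanding_on_average X \<mu> \<longleftrightarrow> expanding_on_average_planes X \<mu> (CARD('d) - 1)"
  using coexpanding_on_average_iff_unit_normals expanding_on_average_hyperplanes_iff_unit_normals[OF assms(3)]
  by simp

end
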